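(* Let $\mathcal E$ be a relation on closed values and $t_0,t_1$ closed terms with $t_0\approx^p_{\mathcal E}t_1$. Then for every closed evaluation context $F$, $F[t_0]\approx^p_{\mathcal E}F[t_1]$.
   Context: Terms of $\lambda_S$: $t ::= x \mid \lambda x.t \mid t\,t \mid \mathcal{S}k.t \mid \langle t\rangle$ (shift binds $k$; $\langle\cdot\rangle$ reset), up to $\alpha$-conversion. Values $v::=\lambda x.t$. Pure contexts $E ::= \Box \mid v\,E \mid E\,t$; evaluation contexts $F ::= \Box \mid v\,F \mid F\,t \mid \langle F\rangle$. Reduction: $F[(\lambda x.t)v]\to F[t\{v/x\}]$; $F[\langle E[\mathcal Sk.t]\rangle]\to F[\langle t\{\lambda x.\langle E[x]\rangle/k\}\rangle]$ ($x\notin\mathrm{fv}(E)$); $F[\langle v\rangle]\to F[v]$; $\to^*$ reflexive-transitive closure. Program: term $\langle t\rangle$ (ranged over by $p$). Closures: for $R$ a relation on closed terms, $\widetilde R$ is the smallest relation containing $R$, all $(x,x)$, closed under all term constructors, restricted to closed terms; $\widehat R$ is the smallest relation on closed evaluation contexts with $\Box\widehat R\Box$, $v_0F_0\widehat Rv_1F_1$ if $F_0\widehat RF_1,v_0\widetilde Rv_1$; $F_0t_0\widehat RF_1t_1$ if $F_0\widehat RF_1,t_0\widetilde Rt_1$; $\langle F_0\rangle\widehat R\langle F_1\rangle$ if $F_0\widehat RF_1$. Environmental bisimilarity for programs: an environment $\mathcal E$ is a relation on closed values; an environmental relation $\mathcal X$ is a set of environments and triples $(\mathcal E,t_0,t_1)$,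 $t_0,t_1$ closed, written $t_0\mathcal X_{\mathcal E}t_1$. $\mathcal X$ is an environmental bisimulation for programs if (1) if $t_0\mathcal X_{\mathcal E}t_1$ and $t_0,t_1$ are not both programs, then for all pure $E_0\widehat{\mathcal E}E_1$, $\langle E_0[t_0]\rangle\mathcal X_{\mathcal E}\langle E_1[t_1]\rangle$; (2) if $p_0\mathcal X_{\mathcal E}p_1$: (a) $p_0\to p_0'$ (program) implies $p_1\to^*p_1'$ (program) with $p_0'\mathcal X_{\mathcal E}p_1'$; (b) $p_0\to v_0$ implies $p_1\to^*v_1$ and $\{(v_0,v_1)\}\cup\mathcal E\in\mathcal X$; (c) symmetric conditions; (3) for $\mathcal E\in\mathcal X$, $(\lambda x.t_0)\mathcal E(\lambda x.t_1)$ and $v_0\widetilde{\mathcal E}v_1$ imply $t_0\{v_0/x\}\mathcal X_{\mathcal E}t_1\{v_1/x\}$. $\approx^p$ is the largest such relation; $t_0\approx^p_{\mathcal E}t_1$ means $(\mathcal E,t_0,t_1)\in\approx^p$. *)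

theory Defs
  imports Main
begin

section \<open>Terms of lambda_S (locally nameless: de Bruijn indices, so alpha-equivalence is equality)\<close>

datatype tm = Var nat | Lam tm | App tm tm | Shift tm | Reset tm
  (* Shift t: the shift operator binds index 0 (the continuation variable k) in t *)

fun is_val :: "tm \<Rightarrow> bool" where
  "is_val (Lam _) = True"
| "is_val _ = False"

fun closed_at :: "nat \<Rightarrow> tm \<Rightarrow> bool" where
  "closed_at n (Var i) = (i < n)"
| "closed_at n (Lam t) = closed_at (Suc n) t"
| "closed_at n (App s t) = (closed_at n s \<and> closed_at n t)"
| "closed_at n (Shift t) = closed_at (Suc n) t"
| "closed_at n (Reset t) = closed_at n t"

definition closed :: "tm \<Rightarrow> bool" where
  "closed t = closed_at 0 t"

fun lift :: "nat \<Rightarrow> tm \<Rightarrow> tm" where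
  "lift k (Var i) = (if i < k then Var i else Var (Suc i))"
| "lift k (Lam t) = Lam (lift (Suc k) t)"
| "lift k (App s t) = App (lift k s) (lift k t)"
| "lift k (Shift t) = Shift (lift (Suc k) t)"
| "lift k (Reset t) = Reset (lift k t)"

fun subst :: "nat \<Rightarrow> tm \<Rightarrow> tm \<Rightarrow> tm" where
  "subst k s (Var i) = (if i < k then Var i else if i = k then s else Var (i - 1))"
| "subst k s (Lam t) = Lam (subst (Suc k) (lift 0 s) t)"
| "subst k s (App t u) = App (subst k s t) (subst k s u)"
| "subst k s (Shift t) = Shift (subst (Suc k) (lift 0 s) t)"
| "subst k s (Reset t) = Reset (subst k s t)"

(* CAppL F t = F t ;  CAppR v F = v F ;  CReset F = <F> *)
datatype ctx = Hole | CAppL ctx tm | CAppR tm ctx | CReset ctx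

fun plug :: "ctx \<Rightarrow> tm \<Rightarrow> tm" where
  "plug Hole t = t"
| "plug (CAppL F u) t = App (plug F t) u"
| "plug (CAppR v F) t = App v (plug F t)"
| "plug (CReset F) t = Reset (plug F t)"

fun ectx :: "ctx \<Rightarrow> bool" where
  "ectx Hole = True"
| "ectx (CAppL F u) = ectx F"
| "ectx (CAppR v F) = (is_val v \<and> ectx F)"
| "ectx (CReset F) = ectx F"

fun pctx :: "ctx \<Rightarrow> bool" where
  "pctx Hole = True"
| "pctx (CAppL F u) = pctx F"
| "pctx (CAppR v F) = (is_val v \<and> pctx F)"
| "pctx (CReset F) = False"

fun liftc :: "nat \<Rightarrow> ctx \<Rightarrow> ctx" where
  "liftc k Hole = Hole"
| "liftc k (CAppL F u) = CAppL (liftc k F) (lift k u)"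
| "liftc k (CAppR v F) = CAppR (lift k v) (liftc k F)"
| "liftc k (CReset F) = CReset (liftc k F)"

fun closed_ctx :: "ctx \<Rightarrow> bool" where
  "closed_ctx Hole = True"
| "closed_ctx (CAppL F u) = (closed_ctx F \<and> closed u)"
| "closed_ctx (CAppR v F) = (closed v \<and> closed_ctx F)"
| "closed_ctx (CReset F) = closed_ctx F"

inductive step :: "tm \<Rightarrow> tm \<Rightarrow> bool" where
  beta: "\<lbrakk>ectx F; is_val v\<rbrakk> \<Longrightarrow> step (plug F (App (Lam t) v)) (plug F (subst 0 v t))"
| shift: "\<lbrakk>ectx F; pctx E\<rbrakk> \<Longrightarrow>
     step (plug F (Reset (plug E (Shift t))))
          (plug F (Reset (subst 0 (Lam (Reset (plug (liftc 0 E) (Var 0)))) t)))"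
| reset: "\<lbrakk>ectx F; is_val v\<rbrakk> \<Longrightarrow> step (plug F (Reset v)) (plug F v)"

definition steps :: "tm \<Rightarrow> tm \<Rightarrow> bool" where
  "steps = step\<^sup>*\<^sup>*"

fun is_prog :: "tm \<Rightarrow> bool" where
  "is_prog (Reset _) = True"
| "is_prog _ = False"

inductive tilde_aux :: "(tm \<times> tm) set \<Rightarrow> tm \<Rightarrow> tm \<Rightarrow> bool" for R where
  base: "(s, t) \<in> R \<Longrightarrow> tilde_aux R s t"
| var: "tilde_aux R (Var i) (Var i)"
| lam: "tilde_aux R s t \<Longrightarrow> tilde_aux R (Lam s) (Lam t)"
| app: "\<lbrakk>tilde_aux R s1 t1; tilde_aux R s2 t2\<rbrakk> \<Longrightarrow> tilde_aux R (App s1 s2) (App t1 t2)"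
| shft: "tilde_aux R s t \<Longrightarrow> tilde_aux R (Shift s) (Shift t)"
| rst: "tilde_aux R s t \<Longrightarrow> tilde_aux R (Reset s) (Reset t)"

definition tilde :: "(tm \<times> tm) set \<Rightarrow> (tm \<times> tm) set" where
  "tilde R = {(s, t). tilde_aux R s t \<and> closed s \<and> closed t}"

inductive hat :: "(tm \<times> tm) set \<Rightarrow> ctx \<Rightarrow> ctx \<Rightarrow> bool" for R where
  hole: "hat R Hole Hole"
| appr: "\<lbrakk>hat R F0 F1; (v0, v1) \<in> tilde R; is_val v0; is_val v1\<rbrakk>
          \<Longrightarrow> hat R (CAppR v0 F0) (CAppR v1 F1)"
| appl: "\<lbrakk>hat R F0 F1; (t0, t1) \<in> tilde R\<rbrakk> \<Longrightarrow> hat R (CAppL F0 t0) (CAppL F1 t1)"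
| rst: "hat R F0 F1 \<Longrightarrow> hat R (CReset F0) (CReset F1)"

type_synonym env = "(tm \<times> tm) set"
(* an environmental relation: its set of environments, and its set of triples (E, t0, t1) *)
type_synonym envrel = "env set \<times> (env \<times> tm \<times> tm) set"

definition is_env :: "env \<Rightarrow> bool" where
  "is_env E \<longleftrightarrow> (\<forall>(v0, v1) \<in> E. closed v0 \<and> closed v1 \<and> is_val v0 \<and> is_val v1)"

definition envrel_wf :: "envrel \<Rightarrow> bool" where
  "envrel_wf X \<longleftrightarrow> (\<forall>E \<in> fst X. is_env E) \<and>
     (\<forall>(E, t0, t1) \<in> snd X. is_env E \<and> closed t0 \<and> closed t1)"

definition prog_bisim :: "envrel \<Rightarrow> bool" where
  "prog_bisim X \<longleftrightarrow> envrel_wf X \<and>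
    \<comment> \<open>(1)\<close>
    (\<forall>E t0 t1. (E, t0, t1) \<in> snd X \<and> \<not> (is_prog t0 \<and> is_prog t1) \<longrightarrow>
       (\<forall>E0 E1. pctx E0 \<and> pctx E1 \<and> hat E E0 E1 \<longrightarrow>
          (E, Reset (plug E0 t0), Reset (plug E1 t1)) \<in> snd X)) \<and>
    \<comment> \<open>(2a),(2b)\<close>
    (\<forall>E p0 p1. (E, p0, p1) \<in> snd X \<and> is_prog p0 \<and> is_prog p1 \<longrightarrow>
       (\<forall>p0'. step p0 p0' \<and> is_prog p0' \<longrightarrow>
          (\<exists>p1'. steps p1 p1' \<and> is_prog p1' \<and> (E, p0', p1') \<in> snd X)) \<and>
       (\<forall>v0. step p0 v0 \<and> is_val v0 \<longrightarrow>
          (\<exists>v1. steps p1 v1 \<and> is_val v1 \<and> {(v0, v1)} \<union> E \<in> fst X))) \<and>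
    \<comment> \<open>(2c) symmetric conditions\<close>
    (\<forall>E p0 p1. (E, p0, p1) \<in> snd X \<and> is_prog p0 \<and> is_prog p1 \<longrightarrow>
       (\<forall>p1'. step p1 p1' \<and> is_prog p1' \<longrightarrow>
          (\<exists>p0'. steps p0 p0' \<and> is_prog p0' \<and> (E, p0', p1') \<in> snd X)) \<and>
       (\<forall>v1. step p1 v1 \<and> is_val v1 \<longrightarrow>
          (\<exists>v0. steps p0 v0 \<and> is_val v0 \<and> {(v0, v1)} \<union> E \<in> fst X))) \<and>
    \<comment> \<open>(3)\<close>
    (\<forall>E \<in> fst X. \<forall>t0 t1 v0 v1. (Lam t0, Lam t1) \<in> E \<and> (v0, v1) \<in> tilde E
         \<and> is_val v0 \<and> is_val v1 \<longrightarrow>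
       (E, subst 0 v0 t0, subst 0 v1 t1) \<in> snd X)"

(* t0 \<approx>^p_E t1 : the triple belongs to the largest environmental bisimulation for programs
   (= the union of all of them) *)
definition bisimp :: "env \<Rightarrow> tm \<Rightarrow> tm \<Rightarrow> bool" where
  "bisimp E t0 t1 \<longleftrightarrow> (\<exists>X. prog_bisim X \<and> (E, t0, t1) \<in> snd X)"

end

theory Submission
  imports Defs
begin

text \<open>Closing a bisimulation X under related evaluation contexts yields again a bisimulation.
  A step of a plugged program F0[p0] either takes place inside p0, and is then answered by X,
  or contracts a redex whose parts are related by the closure of an environment; the closure
  is preserved by substitution, so the contractum stays related, unless a lambda of the
  environment itself is applied, which is answered by the lambda clause of X. Only the
  forward half of the clauses has to be checked, as the construction commutes with taking
  converses.\<close>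

section \<open>Closed terms and contexts\<close>

lemma closed_at_mono: "closed_at n t \<Longrightarrow> n \<le> m \<Longrightarrow> closed_at m t"
  by (induction t arbitrary: n m) auto

lemma lift_closed_at: "closed_at k t \<Longrightarrow> lift k t = t"
  by (induction t arbitrary: k) auto

lemma subst_closed_at: "closed_at k t \<Longrightarrow> subst k s t = t"
  by (induction t arbitrary: k s) auto

lemma closed_at_lift: "closed_at n t \<Longrightarrow> closed_at (Suc n) (lift k t)"
  by (induction t arbitrary: n k) auto

lemma closed_at_subst:
  "closed_at (Suc n) t \<Longrightarrow> closed_at n s \<Longrightarrow> k \<le> n \<Longrightarrow> closed_at n (subst k s t)"
  by (induction t arbitrary: n k s) (auto simp: closed_at_lift)

fun closed_ctx_at :: "nat \<Rightarrow> ctx \<Rightarrow> bool" where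
  "closed_ctx_at n Hole = True"
| "closed_ctx_at n (CAppL F u) = (closed_ctx_at n F \<and> closed_at n u)"
| "closed_ctx_at n (CAppR v F) = (closed_at n v \<and> closed_ctx_at n F)"
| "closed_ctx_at n (CReset F) = closed_ctx_at n F"

lemma closed_at_plug: "closed_at n (plug F t) \<longleftrightarrow> closed_ctx_at n F \<and> closed_at n t"
  by (induction F) auto

lemma closed_ctx_at_0: "closed_ctx_at 0 F \<longleftrightarrow> closed_ctx F"
  by (induction F) (auto simp: closed_def)

lemma closed_plug: "closed (plug F t) \<longleftrightarrow> closed_ctx F \<and> closed t"
  by (simp add: closed_def closed_at_plug closed_ctx_at_0)

lemma closed_ctx_at_liftc: "closed_ctx_at n F \<Longrightarrow> closed_ctx_at (Suc n) (liftc k F)"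
  by (induction F) (auto simp: closed_at_lift)

fun ctx_comp :: "ctx \<Rightarrow> ctx \<Rightarrow> ctx" where
  "ctx_comp Hole G = G"
| "ctx_comp (CAppL F u) G = CAppL (ctx_comp F G) u"
| "ctx_comp (CAppR v F) G = CAppR v (ctx_comp F G)"
| "ctx_comp (CReset F) G = CReset (ctx_comp F G)"

lemma plug_ctx_comp [simp]: "plug (ctx_comp F G) t = plug F (plug G t)"
  by (induction F) auto

lemma ectx_ctx_comp: "ectx F \<Longrightarrow> ectx G \<Longrightarrow> ectx (ctx_comp F G)"
  by (induction F) auto

lemma pctx_imp_ectx: "pctx F \<Longrightarrow> ectx F"
  by (induction F) auto

lemma is_val_plug [simp]: "is_val (plug F t) \<longleftrightarrow> F = Hole \<and> is_val t"
  by (cases F) auto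

lemma is_prog_plug: "is_prog (plug F t) \<longleftrightarrow> F = Hole \<and> is_prog t \<or> (\<exists>G. F = CReset G)"
  by (cases F) auto

section \<open>Reduction\<close>

inductive contracts :: "tm \<Rightarrow> tm \<Rightarrow> bool" where
  beta: "is_val v \<Longrightarrow> contracts (App (Lam t) v) (subst 0 v t)"
| shift: "pctx E \<Longrightarrow> contracts (Reset (plug E (Shift t)))
            (Reset (subst 0 (Lam (Reset (plug (liftc 0 E) (Var 0)))) t))"
| reset: "is_val v \<Longrightarrow> contracts (Reset v) v"

lemma step_iff_contracts:
  "step a b \<longleftrightarrow> (\<exists>F x y. ectx F \<and> contracts x y \<and> a = plug F x \<and> b = plug F y)"
  by (auto elim!: step.cases contracts.cases intro: step.intros contracts.intros)

lemma step_plug: "step a b \<Longrightarrow> ectx G \<Longrightarrow> step (plug G a) (plug G b)"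
  unfolding step_iff_contracts
  by (metis ectx_ctx_comp plug_ctx_comp)

lemma steps_plug: "steps a b \<Longrightarrow> ectx G \<Longrightarrow> steps (plug G a) (plug G b)"
  unfolding steps_def
  by (induction rule: rtranclp_induct) (auto intro: rtranclp.rtrancl_into_rtrancl step_plug)

lemma step_App_left:
  assumes "step (App a u) r" and "\<not> is_val a"
  shows "\<exists>a'. step a a' \<and> r = App a' u"
proof -
  from assms(1) obtain F x y where F: "ectx F" "contracts x y" "App a u = plug F x" "r = plug F y"
    unfolding step_iff_contracts by blast
  with assms(2) show ?thesis
    by (cases F) (auto elim: contracts.cases simp: step_iff_contracts)
qed

lemma step_App_right:
  assumes "step (App v a) r" and "is_val v" and "\<not> is_val a"
  shows "\<exists>a'. step a a' \<and> r = App v a'"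
proof -
  from assms(1) obtain F x y where F: "ectx F" "contracts x y" "App v a = plug F x" "r = plug F y"
    unfolding step_iff_contracts by blast
  with assms(2,3) show ?thesis
    by (cases F) (auto elim: contracts.cases simp: step_iff_contracts)
qed

lemma step_Reset_inner:
  assumes "step (Reset a) r" and "\<not> is_val a" and "\<And>E t. pctx E \<Longrightarrow> a \<noteq> plug E (Shift t)"
  shows "\<exists>a'. step a a' \<and> r = Reset a'"
proof -
  from assms(1) obtain F x y where F: "ectx F" "contracts x y" "Reset a = plug F x" "r = plug F y"
    unfolding step_iff_contracts by blast
  show ?thesis
  proof (cases F)
    case Hole
    with F have "contracts (Reset a) y" by simp
    then show ?thesis using assms(2,3) F Hole by cases auto
  qed (use F in \<open>auto simp: step_iff_contracts\<close>)
qed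

lemma plug_Reset_neq_plug_Shift: "pctx E \<Longrightarrow> ectx G \<Longrightarrow> plug G (Reset a) \<noteq> plug E (Shift t)"
proof (induction E arbitrary: G)
  case Hole then show ?case by (cases G) auto
next
  case (CAppL E u) then show ?case by (cases G) auto
next
  case (CAppR v E) then show ?case by (cases G) auto
qed simp

text \<open>The reset cannot be part of the contracted redex: it is no value, so it is not an
  argument, and the pure context of a shift redex contains no reset.\<close>

lemma step_plug_Reset_inv:
  "ectx G \<Longrightarrow> step (plug G (Reset a)) r \<Longrightarrow> \<exists>s. step (Reset a) s \<and> r = plug G s"
proof (induction G arbitrary: r)
  case (CAppL G u)
  then show ?case using step_App_left[of "plug G (Reset a)" u r] by fastforce
next
  case (CAppR v G)
  then show ?case using step_App_right[of v "plug G (Reset a)" r] by fastforce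
next
  case (CReset G)
  then show ?case
    using step_Reset_inner[of "plug G (Reset a)" r] plug_Reset_neq_plug_Shift by fastforce
qed simp

lemma step_Reset_cases:
  assumes "step (Reset a) r"
  shows "is_prog r \<or> is_val r"
proof -
  obtain F x y where "ectx F" "contracts x y" "Reset a = plug F x" "r = plug F y"
    using assms unfolding step_iff_contracts by blast
  then show ?thesis by (cases F) (auto elim: contracts.cases)
qed

lemma contracts_closed: "contracts x y \<Longrightarrow> closed_at n x \<Longrightarrow> closed_at n y"
  by (induction rule: contracts.induct)
    (auto simp: closed_at_plug intro!: closed_at_subst closed_ctx_at_liftc)

lemma step_closed: "step a b \<Longrightarrow> closed a \<Longrightarrow> closed b"
  unfolding step_iff_contracts closed_def by (auto simp: closed_at_plug dest: contracts_closed)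

section \<open>The closures tilde and hat\<close>

lemma tilde_aux_refl: "tilde_aux R t t"
  by (induction t) (auto intro: tilde_aux.intros)

lemma tilde_aux_mono: "tilde_aux R a b \<Longrightarrow> R \<subseteq> S \<Longrightarrow> tilde_aux S a b"
  by (induction rule: tilde_aux.induct) (auto intro: tilde_aux.intros)

lemma tilde_aux_tilde: "tilde_aux R a b \<Longrightarrow> R \<subseteq> tilde S \<Longrightarrow> tilde_aux S a b"
  by (induction rule: tilde_aux.induct) (auto intro: tilde_aux.intros simp: tilde_def)

lemma tilde_subset_tilde: "R \<subseteq> tilde S \<Longrightarrow> tilde R \<subseteq> tilde S"
  using tilde_aux_tilde by (auto simp: tilde_def)

lemma tilde_mono: "R \<subseteq> S \<Longrightarrow> tilde R \<subseteq> tilde S"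
  unfolding tilde_def using tilde_aux_mono by blast

lemma env_subset_tilde: "is_env R \<Longrightarrow> R \<subseteq> tilde R"
  unfolding is_env_def tilde_def by (auto intro: tilde_aux.base)

lemma env_closed_at: "is_env R \<Longrightarrow> (a, b) \<in> R \<Longrightarrow> closed_at k a \<and> closed_at k b"
  unfolding is_env_def closed_def by (auto intro: closed_at_mono)

lemma tilde_aux_is_val: "tilde_aux R a b \<Longrightarrow> is_env R \<Longrightarrow> is_val a \<Longrightarrow> is_val b"
  by (induction rule: tilde_aux.induct) (auto simp: is_env_def)

lemma tilde_aux_App_inv:
  "tilde_aux R (App a b) c \<Longrightarrow> is_env R \<Longrightarrow> \<exists>a' b'. c = App a' b' \<and> tilde_aux R a a' \<and> tilde_aux R b b'"
  by (erule tilde_aux.cases) (auto simp: is_env_def)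

lemma tilde_aux_Reset_inv:
  "tilde_aux R (Reset a) c \<Longrightarrow> is_env R \<Longrightarrow> \<exists>a'. c = Reset a' \<and> tilde_aux R a a'"
  by (erule tilde_aux.cases) (auto simp: is_env_def)

lemma tilde_aux_Shift_inv:
  "tilde_aux R (Shift a) c \<Longrightarrow> is_env R \<Longrightarrow> \<exists>a'. c = Shift a' \<and> tilde_aux R a a'"
  by (erule tilde_aux.cases) (auto simp: is_env_def)

lemma tilde_aux_Lam_inv:
  "tilde_aux R (Lam a) c \<Longrightarrow> (Lam a, c) \<in> R \<or> (\<exists>a'. c = Lam a' \<and> tilde_aux R a a')"
  by (erule tilde_aux.cases) auto

lemma tilde_aux_is_prog: "tilde_aux R a b \<Longrightarrow> is_env R \<Longrightarrow> is_prog a \<Longrightarrow> is_prog b"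
  by (cases a) (auto dest: tilde_aux_Reset_inv)

lemma tilde_aux_lift: "tilde_aux R a b \<Longrightarrow> is_env R \<Longrightarrow> tilde_aux R (lift k a) (lift k b)"
proof (induction arbitrary: k rule: tilde_aux.induct)
  case (base s t)
  then show ?case using env_closed_at[OF base(2,1)] by (simp add: lift_closed_at tilde_aux.base)
qed (auto intro: tilde_aux.intros)

lemma tilde_aux_subst:
  "tilde_aux R a b \<Longrightarrow> is_env R \<Longrightarrow> tilde_aux R w0 w1 \<Longrightarrow> tilde_aux R (subst k w0 a) (subst k w1 b)"
proof (induction arbitrary: k w0 w1 rule: tilde_aux.induct)
  case (base s t)
  then show ?case using env_closed_at[OF base(2,1)] by (simp add: subst_closed_at tilde_aux.base)
next
  case (lam s t)
  then show ?case by (simp add: tilde_aux.lam tilde_aux_lift)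
next
  case (shft s t)
  then show ?case by (simp add: tilde_aux.shft tilde_aux_lift)
qed (auto intro: tilde_aux.intros)

lemma tilde_aux_converse [simp]: "tilde_aux (R\<inverse>) a b \<longleftrightarrow> tilde_aux R b a"
proof -
  have "tilde_aux S b a" if "tilde_aux (S\<inverse>) a b" for S a b
    using that by (induction rule: tilde_aux.induct) (auto intro: tilde_aux.intros)
  from this[of R] this[of "R\<inverse>"] show ?thesis by auto
qed

lemma tilde_converse [simp]: "tilde (R\<inverse>) = (tilde R)\<inverse>"
  by (auto simp: tilde_def)

lemma is_env_converse [simp]: "is_env (R\<inverse>) \<longleftrightarrow> is_env R"
  unfolding is_env_def by auto

lemma hat_tilde: "hat R F0 F1 \<Longrightarrow> R \<subseteq> tilde S \<Longrightarrow> hat S F0 F1"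
  by (induction rule: hat.induct) (auto intro: hat.intros dest: tilde_subset_tilde)

lemma hat_mono: "hat R F0 F1 \<Longrightarrow> R \<subseteq> S \<Longrightarrow> hat S F0 F1"
  by (induction rule: hat.induct) (auto intro: hat.intros dest: tilde_mono)

lemma hat_refl: "ectx F \<Longrightarrow> closed_ctx F \<Longrightarrow> hat R F F"
  by (induction F) (auto intro!: hat.intros tilde_aux_refl simp: tilde_def)

lemma hat_ctx_comp: "hat R F0 F1 \<Longrightarrow> hat R G0 G1 \<Longrightarrow> hat R (ctx_comp F0 G0) (ctx_comp F1 G1)"
  by (induction rule: hat.induct) (auto intro: hat.intros)

lemma hat_converse [simp]: "hat (R\<inverse>) F0 F1 \<longleftrightarrow> hat R F1 F0"
proof -
  have "hat S F1 F0" if "hat (S\<inverse>) F0 F1" for S F0 F1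
    using that by (induction rule: hat.induct) (auto intro: hat.intros)
  from this[of R] this[of "R\<inverse>"] show ?thesis by auto
qed

lemma hat_ectx: "hat R F0 F1 \<Longrightarrow> ectx F0 \<and> ectx F1"
  by (induction rule: hat.induct) auto

lemma hat_closed_ctx: "hat R F0 F1 \<Longrightarrow> closed_ctx F0 \<and> closed_ctx F1"
  by (induction rule: hat.induct) (auto simp: tilde_def)

lemma hat_pctx_iff: "hat R F0 F1 \<Longrightarrow> pctx F0 \<longleftrightarrow> pctx F1"
  by (induction rule: hat.induct) auto

lemma hat_Hole_iff: "hat R F0 F1 \<Longrightarrow> F0 = Hole \<longleftrightarrow> F1 = Hole"
  by (induction rule: hat.induct) auto

lemma hat_CReset_iff: "hat R F0 F1 \<Longrightarrow> (\<exists>G. F0 = CReset G) \<longleftrightarrow> (\<exists>G. F1 = CReset G)"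
  by (induction rule: hat.induct) auto

lemma tilde_aux_plug: "hat R F0 F1 \<Longrightarrow> tilde_aux R a b \<Longrightarrow> tilde_aux R (plug F0 a) (plug F1 b)"
  by (induction rule: hat.induct) (auto intro: tilde_aux.intros simp: tilde_def)

lemma tilde_plug: "hat R F0 F1 \<Longrightarrow> (a, b) \<in> tilde R \<Longrightarrow> (plug F0 a, plug F1 b) \<in> tilde R"
  using tilde_aux_plug hat_closed_ctx by (auto simp: tilde_def closed_plug)

lemma tilde_aux_plug_liftc:
  "hat R F0 F1 \<Longrightarrow> is_env R \<Longrightarrow> tilde_aux R a b \<Longrightarrow>
   tilde_aux R (plug (liftc k F0) a) (plug (liftc k F1) b)"
  by (induction rule: hat.induct) (auto intro: tilde_aux.intros tilde_aux_lift simp: tilde_def)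

lemma hat_split_CReset:
  "hat R G0 G1 \<Longrightarrow> \<not> pctx G0 \<Longrightarrow> \<exists>O0 O1 I0 I1. G0 = ctx_comp O0 (CReset I0) \<and>
     G1 = ctx_comp O1 (CReset I1) \<and> hat R O0 O1 \<and> hat R I0 I1 \<and> pctx I0 \<and> pctx I1"
proof (induction rule: hat.induct)
  case (appr F0 F1 v0 v1)
  then show ?case by (metis ctx_comp.simps(3) hat.appr pctx.simps(3))
next
  case (appl F0 F1 t0 t1)
  then show ?case by (metis ctx_comp.simps(2) hat.appl pctx.simps(2))
next
  case (rst F0 F1)
  show ?case
  proof (cases "pctx F0")
    case True
    with rst show ?thesis using hat_pctx_iff
      by (metis ctx_comp.simps(1) hat.hole)
  next
    case False
    with rst show ?thesis by (metis ctx_comp.simps(4) hat.rst)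
  qed
qed simp

lemma tilde_aux_plug_inv:
  assumes "tilde_aux R (plug F0 r) u1" and "is_env R" and "ectx F0"
    and "closed (plug F0 r)" and "closed u1"
  shows "\<exists>F1 r1. u1 = plug F1 r1 \<and> hat R F0 F1 \<and> tilde_aux R r r1"
  using assms
proof (induction F0 arbitrary: u1)
  case Hole
  then show ?case by (intro exI[of _ Hole] exI[of _ u1]) (auto intro: hat.hole)
next
  case (CAppL F u)
  then obtain a b where u1: "u1 = App a b" "tilde_aux R (plug F r) a" "tilde_aux R u b"
    by (auto dest: tilde_aux_App_inv)
  moreover from CAppL.prems u1 have "closed (plug F r)" "closed a" "closed u" "closed b"
    by (auto simp: closed_def)
  moreover have "ectx F" using CAppL.prems by simp
  ultimately obtain F1 r1 where "a = plug F1 r1" "hat R F F1" "tilde_aux R r r1"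
    using CAppL.IH[of a] CAppL.prems(2) by blast
  with u1 \<open>closed u\<close> \<open>closed b\<close> show ?case
    by (intro exI[of _ "CAppL F1 b"] exI[of _ r1]) (auto intro: hat.appl simp: tilde_def)
next
  case (CAppR v F)
  then obtain a b where u1: "u1 = App a b" "tilde_aux R v a" "tilde_aux R (plug F r) b"
    by (auto dest: tilde_aux_App_inv)
  moreover from CAppR.prems u1 have "closed (plug F r)" "closed b" "closed v" "closed a" "is_val a"
    by (auto simp: closed_def dest: tilde_aux_is_val)
  moreover have "ectx F" using CAppR.prems by simp
  ultimately obtain F1 r1 where "b = plug F1 r1" "hat R F F1" "tilde_aux R r r1"
    using CAppR.IH[of b] CAppR.prems(2) by blast
  with u1 \<open>closed v\<close> \<open>closed a\<close> \<open>is_val a\<close> CAppR.prems show ?case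
    by (intro exI[of _ "CAppR a F1"] exI[of _ r1]) (auto intro: hat.appr simp: tilde_def)
next
  case (CReset F)
  then obtain a where u1: "u1 = Reset a" "tilde_aux R (plug F r) a"
    by (auto dest: tilde_aux_Reset_inv)
  moreover from CReset.prems u1 have "closed (plug F r)" "closed a" "ectx F"
    by (auto simp: closed_def)
  ultimately obtain F1 r1 where "a = plug F1 r1" "hat R F F1" "tilde_aux R r r1"
    using CReset.IH[of a] CReset.prems(2) by blast
  with u1 show ?case by (intro exI[of _ "CReset F1"] exI[of _ r1]) (auto intro: hat.rst)
qed

text \<open>The exceptional case is the one covered by the lambda clause of a bisimulation.\<close>

lemma tilde_aux_contracts:
  assumes rel: "tilde_aux R x x1" and "contracts x y" and env: "is_env R"
    and "closed x" and "closed x1"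
  shows "(\<exists>t v t' v1. x = App (Lam t) v \<and> y = subst 0 v t \<and> x1 = App (Lam t') v1 \<and>
            (Lam t, Lam t') \<in> R \<and> tilde_aux R v v1 \<and> is_val v \<and> is_val v1)
         \<or> (\<exists>y1. contracts x1 y1 \<and> tilde_aux R y y1)"
  using assms(2)
proof cases
  case (beta v t)
  then obtain a v1 where x1: "x1 = App a v1" "tilde_aux R (Lam t) a" "tilde_aux R v v1"
    using rel env by (auto dest: tilde_aux_App_inv)
  have "is_val v1" using tilde_aux_is_val[OF x1(3) env] beta by simp
  from tilde_aux_Lam_inv[OF x1(2)] show ?thesis
  proof
    assume "(Lam t, a) \<in> R"
    moreover from this obtain t' where "a = Lam t'"
      using env by (cases a) (auto simp: is_env_def)
    ultimately show ?thesis using beta x1 \<open>is_val v1\<close> by blast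
  next
    assume "\<exists>t'. a = Lam t' \<and> tilde_aux R t t'"
    then obtain t' where "a = Lam t'" "tilde_aux R t t'" by blast
    then have "contracts x1 (subst 0 v1 t')" "tilde_aux R y (subst 0 v1 t')"
      using beta x1 \<open>is_val v1\<close> env by (auto intro: contracts.beta tilde_aux_subst)
    then show ?thesis by blast
  qed
next
  case (shift E t)
  then obtain z where z: "x1 = Reset z" "tilde_aux R (plug E (Shift t)) z"
    using rel env by (auto dest: tilde_aux_Reset_inv)
  with assms(4,5) shift obtain E1 s where E1: "z = plug E1 s" "hat R E E1" "tilde_aux R (Shift t) s"
    using tilde_aux_plug_inv[OF z(2) env pctx_imp_ectx] by (fastforce simp: closed_def)
  then obtain t' where t': "s = Shift t'" "tilde_aux R t t'"
    using env by (auto dest: tilde_aux_Shift_inv)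
  have "pctx E1" using hat_pctx_iff[OF E1(2)] shift by simp
  have "tilde_aux R (Lam (Reset (plug (liftc 0 E) (Var 0)))) (Lam (Reset (plug (liftc 0 E1) (Var 0))))"
    by (intro tilde_aux.lam tilde_aux.rst tilde_aux_plug_liftc[OF E1(2) env] tilde_aux.var)
  then have "tilde_aux R y (Reset (subst 0 (Lam (Reset (plug (liftc 0 E1) (Var 0)))) t'))"
    using shift t' env by (auto intro: tilde_aux.rst tilde_aux_subst)
  moreover have "contracts x1 (Reset (subst 0 (Lam (Reset (plug (liftc 0 E1) (Var 0)))) t'))"
    using contracts.shift[OF \<open>pctx E1\<close>] z E1 t' by simp
  ultimately show ?thesis by blast
next
  case reset
  with rel env obtain v1 where "x1 = Reset v1" "tilde_aux R y v1"
    by (auto dest: tilde_aux_Reset_inv)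
  with reset env show ?thesis by (auto intro: contracts.reset dest: tilde_aux_is_val)
qed

section \<open>Bisimulation up to context\<close>

definition ctx_clause :: "envrel \<Rightarrow> bool" where
  "ctx_clause X \<longleftrightarrow> (\<forall>E t0 t1. (E, t0, t1) \<in> snd X \<and> \<not> (is_prog t0 \<and> is_prog t1) \<longrightarrow>
     (\<forall>E0 E1. pctx E0 \<and> pctx E1 \<and> hat E E0 E1 \<longrightarrow>
        (E, Reset (plug E0 t0), Reset (plug E1 t1)) \<in> snd X))"

definition sim_clause :: "envrel \<Rightarrow> bool" where
  "sim_clause X \<longleftrightarrow> (\<forall>E p0 p1. (E, p0, p1) \<in> snd X \<and> is_prog p0 \<and> is_prog p1 \<longrightarrow>
     (\<forall>p0'. step p0 p0' \<and> is_prog p0' \<longrightarrow>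
        (\<exists>p1'. steps p1 p1' \<and> is_prog p1' \<and> (E, p0', p1') \<in> snd X)) \<and>
     (\<forall>v0. step p0 v0 \<and> is_val v0 \<longrightarrow>
        (\<exists>v1. steps p1 v1 \<and> is_val v1 \<and> {(v0, v1)} \<union> E \<in> fst X)))"

definition rev_sim_clause :: "envrel \<Rightarrow> bool" where
  "rev_sim_clause X \<longleftrightarrow> (\<forall>E p0 p1. (E, p0, p1) \<in> snd X \<and> is_prog p0 \<and> is_prog p1 \<longrightarrow>
     (\<forall>p1'. step p1 p1' \<and> is_prog p1' \<longrightarrow>
        (\<exists>p0'. steps p0 p0' \<and> is_prog p0' \<and> (E, p0', p1') \<in> snd X)) \<and>
     (\<forall>v1. step p1 v1 \<and> is_val v1 \<longrightarrow>
        (\<exists>v0. steps p0 v0 \<and> is_val v0 \<and> {(v0, v1)} \<union> E \<in> fst X)))"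

definition lam_clause :: "envrel \<Rightarrow> bool" where
  "lam_clause X \<longleftrightarrow> (\<forall>E \<in> fst X. \<forall>t0 t1 v0 v1. (Lam t0, Lam t1) \<in> E \<and> (v0, v1) \<in> tilde E
     \<and> is_val v0 \<and> is_val v1 \<longrightarrow> (E, subst 0 v0 t0, subst 0 v1 t1) \<in> snd X)"

definition half_bisim :: "envrel \<Rightarrow> bool" where
  "half_bisim X \<longleftrightarrow> envrel_wf X \<and> ctx_clause X \<and> sim_clause X \<and> lam_clause X"

definition envrel_converse :: "envrel \<Rightarrow> envrel" where
  "envrel_converse X = (converse ` fst X, (\<lambda>(E, a, b). (E\<inverse>, b, a)) ` snd X)"

lemma mem_fst_envrel_converse [simp]: "E \<in> fst (envrel_converse X) \<longleftrightarrow> E\<inverse> \<in> fst X"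
  unfolding envrel_converse_def by (auto intro: image_eqI[of _ _ "E\<inverse>"])

lemma mem_snd_envrel_converse [simp]: "(E, a, b) \<in> snd (envrel_converse X) \<longleftrightarrow> (E\<inverse>, b, a) \<in> snd X"
  unfolding envrel_converse_def by (auto intro: image_eqI[of _ _ "(E\<inverse>, b, a)"])

lemma envrel_converse_converse [simp]: "envrel_converse (envrel_converse X) = X"
  by (auto simp: prod_eq_iff)

lemma converse_insert_pair [simp]: "(insert (a, b) R)\<inverse> = insert (b, a) (R\<inverse>)"
  by auto

lemma envrel_wf_converse: "envrel_wf X \<Longrightarrow> envrel_wf (envrel_converse X)"
  unfolding envrel_wf_def by (auto simp: envrel_converse_def)

lemma ctx_clause_converse: "ctx_clause X \<Longrightarrow> ctx_clause (envrel_converse X)"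
  unfolding ctx_clause_def by (metis hat_converse mem_snd_envrel_converse)

lemma lam_clause_converse: "lam_clause X \<Longrightarrow> lam_clause (envrel_converse X)"
  unfolding lam_clause_def by auto

lemma sim_clause_converse: "sim_clause (envrel_converse X) \<longleftrightarrow> rev_sim_clause X"
proof
  assume sim: "sim_clause (envrel_converse X)"
  show "rev_sim_clause X"
    unfolding rev_sim_clause_def
  proof (intro allI impI conjI)
    fix E p0 p1 p1'
    assume "(E, p0, p1) \<in> snd X \<and> is_prog p0 \<and> is_prog p1" "step p1 p1' \<and> is_prog p1'"
    with sim obtain q where "steps p0 q" "is_prog q" "(E\<inverse>, p1', q) \<in> snd (envrel_converse X)"
      unfolding sim_clause_def by (metis converse_converse mem_snd_envrel_converse)
    then show "\<exists>p0'. steps p0 p0' \<and> is_prog p0' \<and> (E, p0', p1') \<in> snd X" by auto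
  next
    fix E p0 p1 v1
    assume "(E, p0, p1) \<in> snd X \<and> is_prog p0 \<and> is_prog p1" "step p1 v1 \<and> is_val v1"
    with sim obtain q where "steps p0 q" "is_val q" "{(v1, q)} \<union> E\<inverse> \<in> fst (envrel_converse X)"
      unfolding sim_clause_def by (metis converse_converse mem_snd_envrel_converse)
    then show "\<exists>v0. steps p0 v0 \<and> is_val v0 \<and> {(v0, v1)} \<union> E \<in> fst X" by auto
  qed
next
  assume rev: "rev_sim_clause X"
  show "sim_clause (envrel_converse X)"
    unfolding sim_clause_def
  proof (intro allI impI conjI)
    fix E p0 p1 p0'
    assume "(E, p0, p1) \<in> snd (envrel_converse X) \<and> is_prog p0 \<and> is_prog p1"
      "step p0 p0' \<and> is_prog p0'"
    moreover from this have "(E\<inverse>, p1, p0) \<in> snd X" by simp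
    ultimately obtain q where "steps p1 q" "is_prog q" "(E\<inverse>, q, p0') \<in> snd X"
      using rev unfolding rev_sim_clause_def by blast
    then show "\<exists>p1'. steps p1 p1' \<and> is_prog p1' \<and> (E, p0', p1') \<in> snd (envrel_converse X)" by auto
  next
    fix E p0 p1 v0
    assume "(E, p0, p1) \<in> snd (envrel_converse X) \<and> is_prog p0 \<and> is_prog p1"
      "step p0 v0 \<and> is_val v0"
    moreover from this have "(E\<inverse>, p1, p0) \<in> snd X" by simp
    ultimately obtain q where "steps p1 q" "is_val q" "{(q, v0)} \<union> E\<inverse> \<in> fst X"
      using rev unfolding rev_sim_clause_def by blast
    then show "\<exists>v1. steps p1 v1 \<and> is_val v1 \<and> {(v0, v1)} \<union> E \<in> fst (envrel_converse X)" by auto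
  qed
qed

lemma prog_bisim_iff_half_bisim:
  "prog_bisim X \<longleftrightarrow> half_bisim X \<and> half_bisim (envrel_converse X)"
proof -
  have "prog_bisim X \<longleftrightarrow>
      envrel_wf X \<and> ctx_clause X \<and> sim_clause X \<and> rev_sim_clause X \<and> lam_clause X"
    unfolding prog_bisim_def ctx_clause_def sim_clause_def rev_sim_clause_def lam_clause_def
    by (rule refl)
  then show ?thesis
    using envrel_wf_converse ctx_clause_converse lam_clause_converse sim_clause_converse
    unfolding half_bisim_def by blast
qed

definition matching_step :: "envrel \<Rightarrow> env \<Rightarrow> tm \<Rightarrow> tm \<Rightarrow> bool" where
  "matching_step X E r0 r1 \<longleftrightarrow> (is_prog r0 \<longrightarrow> is_prog r1 \<and> (E, r0, r1) \<in> snd X) \<and>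
     (is_val r0 \<longrightarrow> is_val r1 \<and> {(r0, r1)} \<union> E \<in> fst X)"

lemma sim_clauseI:
  assumes "\<And>E p0 p1 r0. (E, p0, p1) \<in> snd X \<Longrightarrow> is_prog p0 \<Longrightarrow> is_prog p1 \<Longrightarrow> step p0 r0
    \<Longrightarrow> \<exists>r1. steps p1 r1 \<and> matching_step X E r0 r1"
  shows "sim_clause X"
  unfolding sim_clause_def
proof (intro allI impI conjI)
  fix E p0 p1 r0
  assume "(E, p0, p1) \<in> snd X \<and> is_prog p0 \<and> is_prog p1"
  note match = assms[OF this[THEN conjunct1] this[THEN conjunct2, THEN conjunct1]
      this[THEN conjunct2, THEN conjunct2]]
  show "\<exists>p1'. steps p1 p1' \<and> is_prog p1' \<and> (E, r0, p1') \<in> snd X" if "step p0 r0 \<and> is_prog r0"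
    using match[of r0] that unfolding matching_step_def by blast
  show "\<exists>v1. steps p1 v1 \<and> is_val v1 \<and> {(r0, v1)} \<union> E \<in> fst X" if "step p0 r0 \<and> is_val r0"
    using match[of r0] that unfolding matching_step_def by blast
qed

text \<open>The candidate bisimulation for the theorem: triples of X plugged into related
  contexts, and pairs related by the closure of an environment of X, over any environment
  contained in that closure.\<close>

definition upto_ctx_envs :: "envrel \<Rightarrow> env set" where
  "upto_ctx_envs X = {E'. is_env E' \<and> (\<exists>E \<in> fst X. E' \<subseteq> tilde E)}"

definition upto_ctx_plugged :: "envrel \<Rightarrow> (env \<times> tm \<times> tm) set" where
  "upto_ctx_plugged X = {(E', plug G0 s0, plug G1 s1) | E' E G0 G1 s0 s1.
     (E, s0, s1) \<in> snd X \<and> hat E G0 G1 \<and> (is_prog s0 \<and> is_prog s1 \<or> pctx G0 \<and> pctx G1) \<and>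
     is_env E' \<and> E' \<subseteq> tilde E}"

definition upto_ctx_tilde :: "envrel \<Rightarrow> (env \<times> tm \<times> tm) set" where
  "upto_ctx_tilde X = {(E', u0, u1) | E' E u0 u1.
     E \<in> fst X \<and> (u0, u1) \<in> tilde E \<and> is_env E' \<and> E' \<subseteq> tilde E}"

definition upto_ctx :: "envrel \<Rightarrow> envrel" where
  "upto_ctx X = (upto_ctx_envs X, upto_ctx_plugged X \<union> upto_ctx_tilde X)"

lemma env_in_upto_ctx: "E \<in> fst X \<Longrightarrow> is_env E' \<Longrightarrow> E' \<subseteq> tilde E \<Longrightarrow> E' \<in> fst (upto_ctx X)"
  unfolding upto_ctx_def upto_ctx_envs_def by auto

lemma plugged_in_upto_ctx:
  "(E, s0, s1) \<in> snd X \<Longrightarrow> hat E G0 G1 \<Longrightarrow> is_prog s0 \<and> is_prog s1 \<or> pctx G0 \<and> pctx G1 \<Longrightarrow>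
   is_env E' \<Longrightarrow> E' \<subseteq> tilde E \<Longrightarrow> (E', plug G0 s0, plug G1 s1) \<in> snd (upto_ctx X)"
  unfolding upto_ctx_def upto_ctx_plugged_def snd_conv by blast

lemma tilde_in_upto_ctx:
  "E \<in> fst X \<Longrightarrow> (u0, u1) \<in> tilde E \<Longrightarrow> is_env E' \<Longrightarrow> E' \<subseteq> tilde E \<Longrightarrow>
   (E', u0, u1) \<in> snd (upto_ctx X)"
  unfolding upto_ctx_def upto_ctx_tilde_def by auto

text \<open>The restriction on the plugged triples is harmless: by the context clause, an
  impure context may be cut at its innermost reset.\<close>

lemma plug_in_upto_ctx:
  assumes "ctx_clause X" and x: "(E, s0, s1) \<in> snd X" and h: "hat E G0 G1"
    and "is_env E'" and "E' \<subseteq> tilde E"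
  shows "(E', plug G0 s0, plug G1 s1) \<in> snd (upto_ctx X)"
proof (cases "is_prog s0 \<and> is_prog s1 \<or> pctx G0")
  case True
  with hat_pctx_iff[OF h] show ?thesis using plugged_in_upto_ctx[OF x h _ assms(4,5)] by blast
next
  case False
  then obtain O0 O1 I0 I1 where split: "G0 = ctx_comp O0 (CReset I0)" "G1 = ctx_comp O1 (CReset I1)"
    "hat E O0 O1" "hat E I0 I1" "pctx I0" "pctx I1"
    using hat_split_CReset[OF h] by blast
  with False x assms(1) have "(E, Reset (plug I0 s0), Reset (plug I1 s1)) \<in> snd X"
    unfolding ctx_clause_def by blast
  from plugged_in_upto_ctx[OF this split(3) _ assms(4,5)] split show ?thesis by simp
qed

lemma tilde_matching_step:
  assumes E: "E \<in> fst X" and env: "is_env E" and "is_env E'" and "E' \<subseteq> tilde E"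
    and r: "(r0, r1) \<in> tilde E"
  shows "matching_step (upto_ctx X) E' r0 r1"
  unfolding matching_step_def
proof (intro conjI impI)
  have rel: "tilde_aux E r0 r1" and "closed r0" "closed r1" using r by (auto simp: tilde_def)
  show "is_prog r1" if "is_prog r0" using tilde_aux_is_prog[OF rel env that] .
  show "(E', r0, r1) \<in> snd (upto_ctx X)" by (rule tilde_in_upto_ctx[OF E r assms(3,4)])
  show val: "is_val r1" if "is_val r0" using tilde_aux_is_val[OF rel env that] .
  show "{(r0, r1)} \<union> E' \<in> fst (upto_ctx X)" if "is_val r0"
  proof (rule env_in_upto_ctx[OF E])
    show "is_env ({(r0, r1)} \<union> E')"
      using that val[OF that] \<open>closed r0\<close> \<open>closed r1\<close> assms(3) unfolding is_env_def closed_def by auto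
    show "{(r0, r1)} \<union> E' \<subseteq> tilde E" using r assms(4) by blast
  qed
qed

lemma upto_ctx_plugged_sim:
  assumes half: "half_bisim X" and m: "(E', p0, p1) \<in> upto_ctx_plugged X"
    and "is_prog p0" and "is_prog p1" and st: "step p0 r0"
  shows "\<exists>r1. steps p1 r1 \<and> matching_step (upto_ctx X) E' r0 r1"
proof -
  obtain E G0 G1 s0 s1 where A: "p0 = plug G0 s0" "p1 = plug G1 s1" "(E, s0, s1) \<in> snd X"
      "hat E G0 G1" "is_prog s0 \<and> is_prog s1 \<or> pctx G0 \<and> pctx G1" "is_env E'" "E' \<subseteq> tilde E"
    using m unfolding upto_ctx_plugged_def by blast
  have wf: "envrel_wf X" and sim: "sim_clause X" and ctx: "ctx_clause X"
    using half unfolding half_bisim_def by auto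
  have "ectx G0" "ectx G1" using hat_ectx[OF A(4)] by auto
  have progs: "is_prog s0 \<and> is_prog s1"
    using A assms(3,4) hat_Hole_iff[OF A(4)] by (cases "G0 = Hole") (auto simp: is_prog_plug)
  then obtain a where "s0 = Reset a" by (cases s0) auto
  then obtain s' where s': "step s0 s'" "r0 = plug G0 s'"
    using step_plug_Reset_inv[OF \<open>ectx G0\<close>] st A(1) by blast
  from step_Reset_cases s' \<open>s0 = Reset a\<close> have "is_prog s' \<or> is_val s'" by blast
  then show ?thesis
  proof
    assume "is_prog s'"
    with sim A(3) progs s' obtain s1' where "steps s1 s1'" "is_prog s1'" "(E, s', s1') \<in> snd X"
      unfolding sim_clause_def by blast
    moreover have "is_prog (plug G1 s1')"
      using \<open>is_prog p0\<close> A(1) \<open>is_prog s1'\<close> hat_Hole_iff[OF A(4)] hat_CReset_iff[OF A(4)]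
      by (auto simp: is_prog_plug)
    moreover have "\<not> is_val r0" using s'(2) \<open>is_prog s'\<close> by (cases s') auto
    moreover have "(E', r0, plug G1 s1') \<in> snd (upto_ctx X)"
      using plug_in_upto_ctx[OF ctx \<open>(E, s', s1') \<in> snd X\<close> A(4,6,7)] s'(2) by simp
    moreover have "steps p1 (plug G1 s1')" using steps_plug[OF \<open>steps s1 s1'\<close> \<open>ectx G1\<close>] A(2) by simp
    ultimately show ?thesis unfolding matching_step_def by blast
  next
    assume "is_val s'"
    with sim A(3) progs s' obtain v1 where v1: "steps s1 v1" "is_val v1" "{(s', v1)} \<union> E \<in> fst X"
      unfolding sim_clause_def by blast
    define E2 where "E2 = {(s', v1)} \<union> E"
    have "is_env E2" using wf v1(3) unfolding E2_def envrel_wf_def by blast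
    then have "(s', v1) \<in> tilde E2" using env_subset_tilde unfolding E2_def by blast
    then have "(r0, plug G1 v1) \<in> tilde E2"
      using tilde_plug[OF hat_mono[OF A(4)]] s'(2) unfolding E2_def by blast
    moreover have "E' \<subseteq> tilde E2" using A(7) tilde_mono[of E E2] unfolding E2_def by blast
    ultimately have "matching_step (upto_ctx X) E' r0 (plug G1 v1)"
      using tilde_matching_step[of E2 X] v1(3) \<open>is_env E2\<close> A(6) unfolding E2_def by blast
    moreover have "steps p1 (plug G1 v1)" using steps_plug[OF v1(1) \<open>ectx G1\<close>] A(2) by simp
    ultimately show ?thesis by blast
  qed
qed

lemma upto_ctx_tilde_sim:
  assumes half: "half_bisim X" and m: "(E', u0, u1) \<in> upto_ctx_tilde X"
    and "is_prog u0" and st: "step u0 r0"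
  shows "\<exists>r1. steps u1 r1 \<and> matching_step (upto_ctx X) E' r0 r1"
proof -
  obtain E where E: "E \<in> fst X" "(u0, u1) \<in> tilde E" "is_env E'" "E' \<subseteq> tilde E"
    using m unfolding upto_ctx_tilde_def by blast
  have env: "is_env E" and ctx: "ctx_clause X" and lam: "lam_clause X"
    using half E(1) unfolding half_bisim_def envrel_wf_def by auto
  have rel: "tilde_aux E u0 u1" "closed u0" "closed u1" using E(2) by (auto simp: tilde_def)
  from st obtain F0 x y where S: "ectx F0" "contracts x y" "u0 = plug F0 x" "r0 = plug F0 y"
    unfolding step_iff_contracts by blast
  obtain F1 x1 where C: "u1 = plug F1 x1" "hat E F0 F1" "tilde_aux E x x1"
    using tilde_aux_plug_inv[of E F0 x u1] rel S env by auto
  have "closed x" "closed x1" using rel S C by (auto simp: closed_plug)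
  from tilde_aux_contracts[OF C(3) S(2) env this] show ?thesis
  proof (elim disjE exE conjE)
    fix t v t' v1
    assume beta: "x = App (Lam t) v" "y = subst 0 v t" "x1 = App (Lam t') v1"
      "(Lam t, Lam t') \<in> E" "tilde_aux E v v1" "is_val v" "is_val v1"
    define r1 where "r1 = plug F1 (subst 0 v1 t')"
    have "(v, v1) \<in> tilde E" using beta \<open>closed x\<close> \<open>closed x1\<close> by (auto simp: tilde_def closed_def)
    with lam E(1) beta have "(E, y, subst 0 v1 t') \<in> snd X"
      unfolding lam_clause_def by blast
    then have "(E', r0, r1) \<in> snd (upto_ctx X)"
      using plug_in_upto_ctx[OF ctx _ C(2) E(3,4)] S(4) unfolding r1_def by simp
    moreover have "step u1 r1"
      using step.beta[OF _ beta(7)] hat_ectx[OF C(2)] C(1) beta(3) unfolding r1_def by simp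
    then have "steps u1 r1" unfolding steps_def by (rule r_into_rtranclp)
    moreover obtain G0 where "F0 = CReset G0"
      using \<open>is_prog u0\<close> S(3) beta(1) by (auto simp: is_prog_plug)
    moreover from this obtain G1 where "F1 = CReset G1" using hat_CReset_iff[OF C(2)] by blast
    ultimately show ?thesis using S(4) unfolding matching_step_def r1_def by auto
  next
    fix y1
    assume "contracts x1 y1" "tilde_aux E y y1"
    then have "step u1 (plug F1 y1)" "tilde_aux E r0 (plug F1 y1)"
      using hat_ectx[OF C(2)] C(1) S(4) tilde_aux_plug[OF C(2)] unfolding step_iff_contracts by auto
    moreover have "closed r0" "closed (plug F1 y1)"
      using step_closed rel st calculation(1) by auto
    ultimately have "steps u1 (plug F1 y1)" "(r0, plug F1 y1) \<in> tilde E"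
      unfolding steps_def tilde_def by auto
    then show ?thesis using tilde_matching_step[OF E(1) env E(3,4)] by blast
  qed
qed

lemma envrel_wf_triple: "envrel_wf X \<Longrightarrow> (E, a, b) \<in> snd X \<Longrightarrow> is_env E \<and> closed a \<and> closed b"
  unfolding envrel_wf_def by blast

lemma upto_ctx_wf:
  assumes wf: "envrel_wf X"
  shows "envrel_wf (upto_ctx X)"
  unfolding envrel_wf_def
proof (intro conjI ballI)
  fix E assume "E \<in> fst (upto_ctx X)"
  then show "is_env E" unfolding upto_ctx_def upto_ctx_envs_def by auto
next
  fix p assume p: "p \<in> snd (upto_ctx X)"
  obtain E a b where p_eq: "p = (E, a, b)" by (cases p)
  have "is_env E \<and> closed a \<and> closed b"
  proof (cases "(E, a, b) \<in> upto_ctx_plugged X")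
    case True
    then obtain E0 G0 G1 s0 s1 where "a = plug G0 s0" "b = plug G1 s1" "(E0, s0, s1) \<in> snd X"
      "hat E0 G0 G1" "is_env E" unfolding upto_ctx_plugged_def by blast
    with envrel_wf_triple[OF wf] hat_closed_ctx show ?thesis by (auto simp: closed_plug)
  next
    case False
    with p p_eq show ?thesis unfolding upto_ctx_def upto_ctx_tilde_def tilde_def by auto
  qed
  then show "case p of (E, t0, t1) \<Rightarrow> is_env E \<and> closed t0 \<and> closed t1" using p_eq by simp
qed

lemma upto_ctx_ctx_clause:
  assumes ctx: "ctx_clause X"
  shows "ctx_clause (upto_ctx X)"
  unfolding ctx_clause_def
proof (intro allI impI)
  fix E' t0 t1 E0 E1
  assume "(E', t0, t1) \<in> snd (upto_ctx X) \<and> \<not> (is_prog t0 \<and> is_prog t1)"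
    and E01: "pctx E0 \<and> pctx E1 \<and> hat E' E0 E1"
  then consider "(E', t0, t1) \<in> upto_ctx_plugged X" | "(E', t0, t1) \<in> upto_ctx_tilde X"
    unfolding upto_ctx_def by auto
  then show "(E', Reset (plug E0 t0), Reset (plug E1 t1)) \<in> snd (upto_ctx X)"
  proof cases
    case 1
    then obtain E G0 G1 s0 s1 where A: "t0 = plug G0 s0" "t1 = plug G1 s1" "(E, s0, s1) \<in> snd X"
      "hat E G0 G1" "is_env E'" "E' \<subseteq> tilde E"
      unfolding upto_ctx_plugged_def by blast
    have "hat E (CReset (ctx_comp E0 G0)) (CReset (ctx_comp E1 G1))"
      using hat_tilde E01 A(4,6) by (blast intro: hat.rst hat_ctx_comp)
    from plug_in_upto_ctx[OF ctx A(3) this A(5,6)] A(1,2) show ?thesis by simp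
  next
    case 2
    then obtain E where B: "E \<in> fst X" "(t0, t1) \<in> tilde E" "is_env E'" "E' \<subseteq> tilde E"
      unfolding upto_ctx_tilde_def by blast
    have "hat E (CReset E0) (CReset E1)" using hat_tilde E01 B(4) by (blast intro: hat.rst)
    from tilde_in_upto_ctx[OF B(1) tilde_plug[OF this B(2)] B(3,4)] show ?thesis by simp
  qed
qed

lemma upto_ctx_lam_clause:
  assumes half: "half_bisim X"
  shows "lam_clause (upto_ctx X)"
  unfolding lam_clause_def
proof (intro ballI allI impI)
  fix E' t0 t1 v0 v1
  assume "E' \<in> fst (upto_ctx X)"
    and h: "(Lam t0, Lam t1) \<in> E' \<and> (v0, v1) \<in> tilde E' \<and> is_val v0 \<and> is_val v1"
  then obtain E where E: "E \<in> fst X" "is_env E'" "E' \<subseteq> tilde E"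
    unfolding upto_ctx_def upto_ctx_envs_def by auto
  have env: "is_env E" and ctx: "ctx_clause X" and lam: "lam_clause X"
    using half E(1) unfolding half_bisim_def envrel_wf_def by auto
  have vv: "(v0, v1) \<in> tilde E" using h tilde_subset_tilde[OF E(3)] by blast
  have "(Lam t0, Lam t1) \<in> tilde E" using h E(3) by blast
  then have rel: "tilde_aux E (Lam t0) (Lam t1)" and "closed (Lam t0)" "closed (Lam t1)"
    by (auto simp: tilde_def)
  from tilde_aux_Lam_inv[OF rel] show "(E', subst 0 v0 t0, subst 0 v1 t1) \<in> snd (upto_ctx X)"
  proof
    assume "(Lam t0, Lam t1) \<in> E"
    with lam E(1) h vv have "(E, subst 0 v0 t0, subst 0 v1 t1) \<in> snd X"
      unfolding lam_clause_def by blast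
    from plug_in_upto_ctx[OF ctx this hat.hole E(2,3)] show ?thesis by simp
  next
    assume "\<exists>t'. Lam t1 = Lam t' \<and> tilde_aux E t0 t'"
    then have "tilde_aux E (subst 0 v0 t0) (subst 0 v1 t1)"
      using tilde_aux_subst env vv by (auto simp: tilde_def)
    moreover have "closed (subst 0 v0 t0)" "closed (subst 0 v1 t1)"
      using \<open>closed (Lam t0)\<close> \<open>closed (Lam t1)\<close> vv
      by (auto simp: closed_def tilde_def intro: closed_at_subst)
    ultimately show ?thesis using tilde_in_upto_ctx[OF E(1) _ E(2,3)] by (auto simp: tilde_def)
  qed
qed

lemma upto_ctx_sim_clause:
  assumes half: "half_bisim X"
  shows "sim_clause (upto_ctx X)"
proof (rule sim_clauseI)
  fix E p0 p1 r0
  assume m: "(E, p0, p1) \<in> snd (upto_ctx X)" and progs: "is_prog p0" "is_prog p1"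
    and st: "step p0 r0"
  from m consider "(E, p0, p1) \<in> upto_ctx_plugged X" | "(E, p0, p1) \<in> upto_ctx_tilde X"
    unfolding upto_ctx_def by auto
  then show "\<exists>r1. steps p1 r1 \<and> matching_step (upto_ctx X) E r0 r1"
  proof cases
    case 1
    from upto_ctx_plugged_sim[OF half 1 progs st] show ?thesis .
  next
    case 2
    from upto_ctx_tilde_sim[OF half 2 progs(1) st] show ?thesis .
  qed
qed

lemma half_bisim_upto_ctx: "half_bisim X \<Longrightarrow> half_bisim (upto_ctx X)"
  using upto_ctx_wf upto_ctx_ctx_clause upto_ctx_sim_clause upto_ctx_lam_clause
  unfolding half_bisim_def by blast

lemma upto_ctx_envs_converse:
  assumes "E \<in> upto_ctx_envs (envrel_converse X)"
  shows "E\<inverse> \<in> upto_ctx_envs X"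
proof -
  from assms obtain E0 where "is_env E" "E0\<inverse> \<in> fst X" "E \<subseteq> tilde E0"
    unfolding upto_ctx_envs_def by auto
  then have "is_env (E\<inverse>)" "E0\<inverse> \<in> fst X" "E\<inverse> \<subseteq> tilde (E0\<inverse>)" by simp_all
  then show ?thesis unfolding upto_ctx_envs_def by blast
qed

lemma upto_ctx_triples_converse:
  assumes "(E', a, b) \<in> snd (upto_ctx (envrel_converse X))"
  shows "(E'\<inverse>, b, a) \<in> snd (upto_ctx X)"
proof -
  consider "(E', a, b) \<in> upto_ctx_plugged (envrel_converse X)"
    | "(E', a, b) \<in> upto_ctx_tilde (envrel_converse X)"
    using assms unfolding upto_ctx_def by auto
  then show ?thesis
  proof cases
    case 1
    then obtain E G0 G1 s0 s1 where A: "a = plug G0 s0" "b = plug G1 s1"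
      "(E, s0, s1) \<in> snd (envrel_converse X)" "hat E G0 G1"
      "is_prog s0 \<and> is_prog s1 \<or> pctx G0 \<and> pctx G1" "is_env E'" "E' \<subseteq> tilde E"
      unfolding upto_ctx_plugged_def by blast
    from A(3,4,6,7) have "(E\<inverse>, s1, s0) \<in> snd X" "hat (E\<inverse>) G1 G0" "is_env (E'\<inverse>)"
      "E'\<inverse> \<subseteq> tilde (E\<inverse>)" by simp_all
    moreover have "is_prog s1 \<and> is_prog s0 \<or> pctx G1 \<and> pctx G0" using A(5) by blast
    ultimately have "(E'\<inverse>, plug G1 s1, plug G0 s0) \<in> snd (upto_ctx X)"
      by (intro plugged_in_upto_ctx)
    with A(1,2) show ?thesis by simp
  next
    case 2
    then obtain E where "E \<in> fst (envrel_converse X)" "(a, b) \<in> tilde E" "is_env E'" "E' \<subseteq> tilde E"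
      unfolding upto_ctx_tilde_def by blast
    then have "E\<inverse> \<in> fst X" "(b, a) \<in> tilde (E\<inverse>)" "is_env (E'\<inverse>)" "E'\<inverse> \<subseteq> tilde (E\<inverse>)"
      by simp_all
    then show ?thesis by (rule tilde_in_upto_ctx)
  qed
qed

lemma upto_ctx_converse: "upto_ctx (envrel_converse X) = envrel_converse (upto_ctx X)"
proof (rule prod_eqI)
  show "fst (upto_ctx (envrel_converse X)) = fst (envrel_converse (upto_ctx X))"
  proof (rule set_eqI, rule iffI)
    fix E
    assume "E \<in> fst (upto_ctx (envrel_converse X))"
    with upto_ctx_envs_converse[of E X]
    show "E \<in> fst (envrel_converse (upto_ctx X))" by (simp add: upto_ctx_def)
  next
    fix E
    assume "E \<in> fst (envrel_converse (upto_ctx X))"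
    with upto_ctx_envs_converse[of "E\<inverse>" "envrel_converse X"]
    show "E \<in> fst (upto_ctx (envrel_converse X))" by (simp add: upto_ctx_def)
  qed
  show "snd (upto_ctx (envrel_converse X)) = snd (envrel_converse (upto_ctx X))"
  proof (rule set_eqI, rule iffI)
    fix p :: "env \<times> tm \<times> tm"
    assume "p \<in> snd (upto_ctx (envrel_converse X))"
    with upto_ctx_triples_converse[of "fst p" "fst (snd p)" "snd (snd p)" X]
    show "p \<in> snd (envrel_converse (upto_ctx X))" by (cases p) simp
  next
    fix p :: "env \<times> tm \<times> tm"
    assume "p \<in> snd (envrel_converse (upto_ctx X))"
    with upto_ctx_triples_converse[of "(fst p)\<inverse>" "snd (snd p)" "fst (snd p)" "envrel_converse X"]
    show "p \<in> snd (upto_ctx (envrel_converse X))" by (cases p) simp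
  qed
qed

lemma prog_bisim_upto_ctx: "prog_bisim X \<Longrightarrow> prog_bisim (upto_ctx X)"
  using half_bisim_upto_ctx upto_ctx_converse prog_bisim_iff_half_bisim by metis

theorem lemma14:
  fixes E :: env and t0 t1 :: tm and F :: ctx
  assumes "is_env E"
    and "closed t0" and "closed t1"
    and "bisimp E t0 t1"
    and "ectx F" and "closed_ctx F"
  shows "bisimp E (plug F t0) (plug F t1)"
proof -
  from assms(4) obtain X where X: "prog_bisim X" "(E, t0, t1) \<in> snd X"
    unfolding bisimp_def by blast
  then have "ctx_clause X" unfolding prog_bisim_iff_half_bisim half_bisim_def by blast
  from plug_in_upto_ctx[OF this X(2) hat_refl[OF assms(5,6)] assms(1) env_subset_tilde[OF assms(1)]]
  have "(E, plug F t0, plug F t1) \<in> snd (upto_ctx X)" .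
  with prog_bisim_upto_ctx[OF X(1)] show ?thesis unfolding bisimp_def by blast
qed

end
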